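(* Let $\nu,\alpha,\kappa,\ell_0>0$, let $\vec u_0\in L^2(\mathbb{R}^3)$ be divergence-free and $\vec f\in L^2(\mathbb{R}^3)\cap\dot H^{-1}(\mathbb{R}^3)$ divergence-free and time independent. Let $\vec u\in L^\infty(]0,+\infty[,L^2)\cap L^2_{loc}([0,+\infty[,\dot H^1)$ be a weak solution of $\partial_t\vec{u}=\nu\Delta\vec{u}-\mathbb{P}((\vec{u}\cdot\nabla)\vec{u})+\vec{f}-\alpha P_\kappa(\vec{u})$, $\operatorname{div}\vec u=0$, $\vec u(0)=\vec u_0$, satisfying for all $t\ge0$ the energy inequality $\|\vec{u}(t)\|_{L^2}^2+2\nu\int_0^t\|\vec{u}(s)\|_{\dot H^1}^2ds\le \|\vec{u}_0\|_{L^2}^2+2\int_0^t\langle \vec{f},\vec{u}(s)\rangle_{\dot H^{-1}\times\dot H^1}ds-2\alpha\int_0^t\|P_\kappa(\vec{u})(s)\|_{L^2}^2ds$. Then $\varepsilon\le F\,U$.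
   Context: $\mathbb P$ is the Leray projector; $P_\kappa$ is the Fourier multiplier $\widehat{P_\kappa \vec u}(\xi)=\mathds 1_{|\xi|<\kappa}\widehat{\vec u}(\xi)$. $\varepsilon=\nu\limsup_{T\to\infty}\frac1T\int_0^T\|\vec u(t)\|_{\dot H^1}^2\frac{dt}{\ell_0^3}$; $U=\big(\limsup_{T\to\infty}\frac1T\int_0^T\|\vec u(t)\|_{L^2}^2\frac{dt}{\ell_0^3}\big)^{1/2}$; $F=\|\vec f\|_{L^2}/\ell_0^{3/2}$. *)

theory Defs
  imports "HOL-Analysis.Analysis"
begin

definition pd :: "'a::real_normed_vector \<Rightarrow> ('a \<Rightarrow> 'b::real_normed_vector) \<Rightarrow> 'a \<Rightarrow> 'b" where
  "pd v g x = frechet_derivative g (at x) v"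

fun iter_pd :: "'a::real_normed_vector list \<Rightarrow> ('a \<Rightarrow> 'b::real_normed_vector) \<Rightarrow> 'a \<Rightarrow> 'b" where
  "iter_pd [] g = g"
| "iter_pd (v # vs) g = pd v (iter_pd vs g)"

definition C_inf :: "('a::real_normed_vector \<Rightarrow> 'b::real_normed_vector) \<Rightarrow> bool" where
  "C_inf g \<longleftrightarrow> (\<forall>vs x. iter_pd vs g differentiable (at x))"

definition compact_support :: "('a::real_normed_vector \<Rightarrow> 'b::real_normed_vector) \<Rightarrow> bool" where
  "compact_support g \<longleftrightarrow> compact (closure {x. g x \<noteq> 0})"

definition test_fun :: "(real^3 \<Rightarrow> real) \<Rightarrow> bool" where
  "test_fun \<phi> \<longleftrightarrow> C_inf \<phi> \<and> compact_support \<phi>"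

definition jac :: "(real^3 \<Rightarrow> real^3) \<Rightarrow> real^3 \<Rightarrow> real^3^3" where
  "jac v x = (\<chi> i j. pd (axis j 1) v x $ i)"

definition lap :: "(real^3 \<Rightarrow> real^3) \<Rightarrow> real^3 \<Rightarrow> real^3" where
  "lap v x = (\<Sum>j\<in>UNIV. pd (axis j 1) (pd (axis j 1) v) x)"

definition sqint :: "('a::euclidean_space \<Rightarrow> 'b::euclidean_space) \<Rightarrow> bool" where
  "sqint v \<longleftrightarrow> v \<in> borel_measurable lborel \<and> integrable lborel (\<lambda>x. (norm (v x))\<^sup>2)"

definition L2norm :: "('a::euclidean_space \<Rightarrow> 'b::euclidean_space) \<Rightarrow> real" where
  "L2norm v = sqrt (\<integral>x. (norm (v x))\<^sup>2 \<partial>lborel)"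

definition div_free :: "(real^3 \<Rightarrow> real^3) \<Rightarrow> bool" where
  "div_free v \<longleftrightarrow> (\<forall>\<phi>. test_fun \<phi> \<longrightarrow> (\<integral>x. pd (v x) \<phi> x \<partial>lborel) = 0)"

definition weak_grad :: "(real^3 \<Rightarrow> real^3) \<Rightarrow> (real^3 \<Rightarrow> real^3^3) \<Rightarrow> bool" where
  "weak_grad v G \<longleftrightarrow> (\<forall>\<phi>. test_fun \<phi> \<longrightarrow> (\<forall>i j.
      (\<integral>x. v x $ i * pd (axis j 1) \<phi> x \<partial>lborel) = - (\<integral>x. G x $ i $ j * \<phi> x \<partial>lborel)))"

definition in_H1dot :: "(real^3 \<Rightarrow> real^3) \<Rightarrow> bool" where
  "in_H1dot v \<longleftrightarrow> (\<exists>G. weak_grad v G \<and> sqint G)"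

definition H1dot_norm :: "(real^3 \<Rightarrow> real^3) \<Rightarrow> real" where
  "H1dot_norm v = (if in_H1dot v then L2norm (SOME G. weak_grad v G \<and> sqint G) else 0)"

text \<open>Dot H^{-1} as the dual of dot H^1: the pairing with test fields is bounded by the
  dot H^1 seminorm.\<close>
definition in_Hdot_minus1 :: "(real^3 \<Rightarrow> real^3) \<Rightarrow> bool" where
  "in_Hdot_minus1 f \<longleftrightarrow> (\<exists>C. \<forall>\<phi>. (\<forall>i. test_fun (\<lambda>x. \<phi> x $ i)) \<longrightarrow>
      \<bar>\<integral>x. f x \<bullet> \<phi> x \<partial>lborel\<bar> \<le> C * L2norm (jac \<phi>))"

text \<open>Duality pairing dot H^{-1} x dot H^1 (for f in L^2, it is the L^2 pairing).\<close>
definition pairing :: "(real^3 \<Rightarrow> real^3) \<Rightarrow> (real^3 \<Rightarrow> real^3) \<Rightarrow> real" where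
  "pairing f v = (\<integral>x. f x \<bullet> v x \<partial>lborel)"

text \<open>Fourier convention: hat u(xi) = int u(x) e^{-i x.xi} dx. Then
  P_kappa u = F^{-1}(1_{|xi|<kappa} hat u) = K_kappa * u with
  K_kappa(z) = (2 pi)^{-3} int_{|xi|<kappa} e^{i z.xi} dxi = (2 pi)^{-3} int_{|xi|<kappa} cos(z.xi) dxi.\<close>
definition Pkernel :: "real \<Rightarrow> real^3 \<Rightarrow> real" where
  "Pkernel \<kappa> z = (2 * pi) powi (-3) * (LINT \<xi>:ball 0 \<kappa>|lborel. cos (z \<bullet> \<xi>))"

definition Pk :: "real \<Rightarrow> (real^3 \<Rightarrow> real^3) \<Rightarrow> real^3 \<Rightarrow> real^3" where
  "Pk \<kappa> v x = (\<integral>y. Pkernel \<kappa> (x - y) *\<^sub>R v y \<partial>lborel)"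

definition st_test :: "(real \<Rightarrow> real^3 \<Rightarrow> real^3) \<Rightarrow> bool" where
  "st_test \<Phi> \<longleftrightarrow> C_inf (case_prod \<Phi>) \<and> compact_support (case_prod \<Phi>) \<and>
     (\<forall>t x. (\<Sum>i\<in>UNIV. jac (\<Phi> t) x $ i $ i) = 0)"

definition dt :: "(real \<Rightarrow> real^3 \<Rightarrow> real^3) \<Rightarrow> real \<Rightarrow> real^3 \<Rightarrow> real^3" where
  "dt \<Phi> t x = frechet_derivative (\<lambda>s. \<Phi> s x) (at t) 1"

text \<open>Weak (Leray) formulation of
  d_t u = nu Lap u - P((u.grad)u) + f - alpha P_kappa u, div u = 0, u(0) = u0,
  tested against divergence-free test fields (the pressure/Leray projector drops out).\<close>
definition weak_solution ::
  "real \<Rightarrow> real \<Rightarrow> real \<Rightarrow> (real^3 \<Rightarrow> real^3) \<Rightarrow> (real^3 \<Rightarrow> real^3) \<Rightarrow> (real \<Rightarrow> real^3 \<Rightarrow> real^3) \<Rightarrow> bool" where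
  "weak_solution \<nu> \<alpha> \<kappa> f u0 u \<longleftrightarrow>
     (AE t in lborel. t > 0 \<longrightarrow> div_free (u t)) \<and> u 0 = u0 \<and>
     (\<forall>\<Phi>. st_test \<Phi> \<longrightarrow>
        (LINT t:{0..}|lborel. (\<integral>x.
            u t x \<bullet> dt \<Phi> t x + \<nu> * (u t x \<bullet> lap (\<Phi> t) x)
          + (\<Sum>i\<in>UNIV. \<Sum>j\<in>UNIV. u t x $ i * u t x $ j * jac (\<Phi> t) x $ i $ j)
          + f x \<bullet> \<Phi> t x - \<alpha> * (Pk \<kappa> (u t) x \<bullet> \<Phi> t x) \<partial>lborel))
        + (\<integral>x. u0 x \<bullet> \<Phi> 0 x \<partial>lborel) = 0)"

end

theory Submission
  imports Defs
begin

text \<open>Dropping the nonnegative terms \<open>\<parallel>u(T)\<parallel>\<^sup>2\<close> and \<open>\<alpha> \<integral>\<parallel>P\<^sub>\<kappa> u\<parallel>\<^sup>2\<close> from the energy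
  inequality leaves \<open>\<nu> \<integral>\<^sub>0\<^sup>T \<parallel>\<nabla>u\<parallel>\<^sup>2 \<le> \<parallel>u\<^sub>0\<parallel>\<^sup>2 / 2 + \<integral>\<^sub>0\<^sup>T \<langle>f, u\<rangle>\<close>. Cauchy-Schwarz in space and
  then in time bounds the work of the force by \<open>\<parallel>f\<parallel> sqrt T (\<integral>\<^sub>0\<^sup>T \<parallel>u\<parallel>\<^sup>2)\<^sup>1\<^sup>/\<^sup>2\<close>. After dividing
  by \<open>T l\<^sub>0\<^sup>3\<close> the initial energy contributes \<open>O(1/T)\<close>, while the time averages of
  \<open>\<parallel>u\<parallel>\<^sup>2\<close> stay bounded because \<open>u \<in> L\<^sup>\<infinity>L\<^sup>2\<close>; taking upper limits gives \<open>\<epsilon> \<le> F U\<close>.\<close>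

lemma
  fixes F G :: "'a \<Rightarrow> real"
  assumes [measurable]: "F \<in> borel_measurable M" "G \<in> borel_measurable M"
    and iF: "integrable M (\<lambda>x. (F x)\<^sup>2)" and iG: "integrable M (\<lambda>x. (G x)\<^sup>2)"
  shows integrable_abs_mult_square_integrable: "integrable M (\<lambda>x. \<bar>F x * G x\<bar>)"
    and integral_abs_mult_le_sqrt:
      "(\<integral>x. \<bar>F x * G x\<bar> \<partial>M) \<le> sqrt (\<integral>x. (F x)\<^sup>2 \<partial>M) * sqrt (\<integral>x. (G x)\<^sup>2 \<partial>M)"
proof -
  have "(\<integral>\<^sup>+x. ennreal \<bar>F x\<bar> * ennreal \<bar>G x\<bar> \<partial>M)\<^sup>2
      \<le> (\<integral>\<^sup>+x. ennreal \<bar>F x\<bar> ^ 2 \<partial>M) * (\<integral>\<^sup>+x. ennreal \<bar>G x\<bar> ^ 2 \<partial>M)"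
    by (rule Cauchy_Schwarz_nn_integral) auto
  also have "\<dots> = ennreal ((\<integral>x. (F x)\<^sup>2 \<partial>M) * (\<integral>x. (G x)\<^sup>2 \<partial>M))"
    using iF iG by (simp add: ennreal_power nn_integral_eq_integral ennreal_mult)
  finally have cs: "(\<integral>\<^sup>+x. ennreal \<bar>F x * G x\<bar> \<partial>M)\<^sup>2
      \<le> ennreal ((\<integral>x. (F x)\<^sup>2 \<partial>M) * (\<integral>x. (G x)\<^sup>2 \<partial>M))"
    by (simp add: abs_mult ennreal_mult)
  then have "(\<integral>\<^sup>+x. ennreal \<bar>F x * G x\<bar> \<partial>M)\<^sup>2 < \<infinity>"
    by (rule order.strict_trans1) simp
  then show int: "integrable M (\<lambda>x. \<bar>F x * G x\<bar>)"
    by (intro integrableI_nonneg) (auto simp: power_less_top_ennreal)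
  have "ennreal ((\<integral>x. \<bar>F x * G x\<bar> \<partial>M)\<^sup>2) \<le> ennreal ((\<integral>x. (F x)\<^sup>2 \<partial>M) * (\<integral>x. (G x)\<^sup>2 \<partial>M))"
    using cs int by (simp add: nn_integral_eq_integral ennreal_power)
  then have "(\<integral>x. \<bar>F x * G x\<bar> \<partial>M)\<^sup>2 \<le> (\<integral>x. (F x)\<^sup>2 \<partial>M) * (\<integral>x. (G x)\<^sup>2 \<partial>M)"
    by (simp add: ennreal_le_iff)
  then show "(\<integral>x. \<bar>F x * G x\<bar> \<partial>M) \<le> sqrt (\<integral>x. (F x)\<^sup>2 \<partial>M) * sqrt (\<integral>x. (G x)\<^sup>2 \<partial>M)"
    by (simp add: real_le_rsqrt flip: real_sqrt_mult)
qed

lemma set_integral_le_sqrt_measure_mult: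
  fixes p N :: "'a \<Rightarrow> real"
  assumes A: "A \<in> sets M" "emeasure M A < \<infinity>"
    and [measurable]: "N \<in> borel_measurable M"
    and iN: "set_integrable M A (\<lambda>x. (N x)\<^sup>2)"
    and c: "c \<ge> 0" and pN: "\<And>x. x \<in> A \<Longrightarrow> \<bar>p x\<bar> \<le> c * N x"
  shows "(LINT x:A|M. p x) \<le> c * sqrt (measure M A) * sqrt (LINT x:A|M. (N x)\<^sup>2)"
proof -
  let ?F = "\<lambda>x. indicator A x :: real"
  let ?G = "\<lambda>x. indicator A x * N x"
  have [measurable]: "A \<in> sets M" by (fact A(1))
  have F2: "(\<lambda>x. (?F x)\<^sup>2) = ?F" and G2: "(\<lambda>x. (?G x)\<^sup>2) = (\<lambda>x. indicator A x * (N x)\<^sup>2)"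
    and FG: "(\<lambda>x. \<bar>?F x * ?G x\<bar>) = (\<lambda>x. indicator A x * \<bar>N x\<bar>)"
    by (auto simp: indicator_def fun_eq_iff)
  have iF: "integrable M (\<lambda>x. (?F x)\<^sup>2)"
    unfolding F2 using A by (simp add: integrable_real_indicator)
  have iG: "integrable M (\<lambda>x. (?G x)\<^sup>2)"
    unfolding G2 using iN by (simp add: set_integrable_def)
  have "(LINT x:A|M. p x) = (\<integral>x. indicator A x * p x \<partial>M)"
    by (simp add: set_lebesgue_integral_def)
  also have "\<dots> \<le> (\<integral>x. c * \<bar>?F x * ?G x\<bar> \<partial>M)"
  proof (rule integral_mono')
    show "integrable M (\<lambda>x. c * \<bar>?F x * ?G x\<bar>)"
      using integrable_abs_mult_square_integrable[OF _ _ iF iG] by simp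
    fix x
    have "p x \<le> c * \<bar>N x\<bar>" if "x \<in> A"
      using pN[OF that] mult_left_mono[OF abs_ge_self[of "N x"] c] abs_ge_self[of "p x"] by linarith
    then show "indicator A x * p x \<le> c * \<bar>?F x * ?G x\<bar>"
      by (simp add: indicator_def abs_mult)
  qed (simp add: c)
  also have "\<dots> \<le> c * (sqrt (\<integral>x. (?F x)\<^sup>2 \<partial>M) * sqrt (\<integral>x. (?G x)\<^sup>2 \<partial>M))"
    using integral_abs_mult_le_sqrt[OF _ _ iF iG] c by (simp add: mult_left_mono)
  also have "\<dots> = c * sqrt (measure M A) * sqrt (LINT x:A|M. (N x)\<^sup>2)"
    unfolding F2 G2 using A by (simp add: set_lebesgue_integral_def)
  finally show ?thesis .
qed

lemma
  fixes N :: "'a \<Rightarrow> real"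
  assumes A: "A \<in> sets M" "emeasure M A < \<infinity>"
    and [measurable]: "N \<in> borel_measurable M"
    and NB: "AE x\<in>A in M. \<bar>N x\<bar> \<le> B"
  shows set_integrable_square_of_bounded: "set_integrable M A (\<lambda>x. (N x)\<^sup>2)"
    and set_integral_square_le_of_bounded: "(LINT x:A|M. (N x)\<^sup>2) \<le> B\<^sup>2 * measure M A"
proof -
  have [measurable]: "A \<in> sets M" by (fact A(1))
  have AE: "AE x in M. indicator A x * (N x)\<^sup>2 \<le> indicator A x * B\<^sup>2"
    using NB by eventually_elim (auto simp: indicator_def abs_le_square_iff[symmetric] intro: order.trans[OF _ abs_ge_self])
  have iB: "integrable M (\<lambda>x. indicator A x * B\<^sup>2 :: real)"
    using A by (intro integrable_mult_left integrable_real_indicator) auto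
  have iN: "integrable M (\<lambda>x. indicator A x * (N x)\<^sup>2)"
    by (rule Bochner_Integration.integrable_bound[OF iB]) (use AE in \<open>auto elim!: eventually_mono\<close>)
  then show "set_integrable M A (\<lambda>x. (N x)\<^sup>2)"
    by (simp add: set_integrable_def)
  have "(LINT x:A|M. (N x)\<^sup>2) \<le> (\<integral>x. indicator A x * B\<^sup>2 \<partial>M)"
    unfolding set_lebesgue_integral_def using integral_mono_AE[OF iN iB AE] by simp
  also have "\<dots> = B\<^sup>2 * measure M A"
    using A by simp
  finally show "(LINT x:A|M. (N x)\<^sup>2) \<le> B\<^sup>2 * measure M A" .
qed

lemma L2norm_nonneg: "L2norm v \<ge> 0"
  unfolding L2norm_def by (simp add: integral_nonneg_AE)

lemma borel_measurable_L2norm_slices: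
  fixes u :: "'a::euclidean_space \<Rightarrow> 'b::euclidean_space \<Rightarrow> 'c::euclidean_space"
  assumes "case_prod u \<in> borel_measurable borel"
  shows "(\<lambda>s. L2norm (u s)) \<in> borel_measurable lborel"
proof -
  have [measurable]: "(\<lambda>(s, x). u s x) \<in> borel_measurable (lborel \<Otimes>\<^sub>M lborel)"
    using assms by (simp add: lborel_prod)
  show ?thesis
    unfolding L2norm_def by measurable
qed

lemma abs_pairing_le_L2norm:
  assumes "sqint f" "sqint v"
  shows "\<bar>pairing f v\<bar> \<le> L2norm f * L2norm v"
proof -
  have [measurable]: "f \<in> borel_measurable lborel" "v \<in> borel_measurable lborel"
    and i: "integrable lborel (\<lambda>x. (norm (f x))\<^sup>2)" "integrable lborel (\<lambda>x. (norm (v x))\<^sup>2)"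
    using assms by (auto simp: sqint_def)
  have "\<bar>pairing f v\<bar> \<le> (\<integral>x. \<bar>f x \<bullet> v x\<bar> \<partial>lborel)"
    unfolding pairing_def by (rule integral_abs_bound)
  also have "\<dots> \<le> (\<integral>x. \<bar>norm (f x) * norm (v x)\<bar> \<partial>lborel)"
    using integrable_abs_mult_square_integrable[OF _ _ i]
    by (intro integral_mono') (auto simp: Cauchy_Schwarz_ineq2)
  also have "\<dots> \<le> L2norm f * L2norm v"
    using integral_abs_mult_le_sqrt[OF _ _ i] by (simp add: L2norm_def)
  finally show ?thesis .
qed

lemma
  fixes u :: "real \<Rightarrow> real^3 \<Rightarrow> real^3"
  assumes T: "T \<ge> 0"
    and u_meas: "case_prod u \<in> borel_measurable borel"
    and bounded: "AE t in lborel. t > 0 \<longrightarrow> L2norm (u t) \<le> M"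
  shows set_integrable_L2norm_square: "set_integrable lborel {0..T} (\<lambda>s. (L2norm (u s))\<^sup>2)"
    and set_integral_L2norm_square_le: "(LINT s:{0..T}|lborel. (L2norm (u s))\<^sup>2) \<le> M\<^sup>2 * T"
proof -
  have "AE s\<in>{0..T} in lborel. \<bar>L2norm (u s)\<bar> \<le> M"
    using bounded AE_lborel_singleton[of 0] by eventually_elim (auto simp: L2norm_nonneg)
  note bounded_on_interval = _ _ borel_measurable_L2norm_slices[OF u_meas] this
  show "set_integrable lborel {0..T} (\<lambda>s. (L2norm (u s))\<^sup>2)"
    using T by (intro set_integrable_square_of_bounded[OF bounded_on_interval]) (auto simp: emeasure_lborel_Icc)
  show "(LINT s:{0..T}|lborel. (L2norm (u s))\<^sup>2) \<le> M\<^sup>2 * T"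
    using T set_integral_square_le_of_bounded[OF bounded_on_interval] by (simp add: emeasure_lborel_Icc)
qed

lemma set_integral_pairing_le:
  fixes u :: "real \<Rightarrow> real^3 \<Rightarrow> real^3"
  assumes T: "T \<ge> 0" and f: "sqint f"
    and u_meas: "case_prod u \<in> borel_measurable borel"
    and u_L2: "\<forall>t\<ge>0. sqint (u t)"
    and bounded: "AE t in lborel. t > 0 \<longrightarrow> L2norm (u t) \<le> M"
  shows "(LINT s:{0..T}|lborel. pairing f (u s))
    \<le> L2norm f * sqrt T * sqrt (LINT s:{0..T}|lborel. (L2norm (u s))\<^sup>2)"
proof -
  have "\<bar>pairing f (u s)\<bar> \<le> L2norm f * L2norm (u s)" if "s \<in> {0..T}" for s
    using abs_pairing_le_L2norm f u_L2 that by auto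
  then show ?thesis
    using set_integral_le_sqrt_measure_mult[OF _ _ borel_measurable_L2norm_slices[OF u_meas]
        set_integrable_L2norm_square[OF T u_meas bounded]] T
    by (simp add: L2norm_nonneg emeasure_lborel_Icc)
qed

lemma time_average_L2norm_square_bounds:
  fixes u :: "real \<Rightarrow> real^3 \<Rightarrow> real^3"
  assumes T: "T > 0" and l: "l > 0"
    and u_meas: "case_prod u \<in> borel_measurable borel"
    and bounded: "AE t in lborel. t > 0 \<longrightarrow> L2norm (u t) \<le> M"
  shows "0 \<le> (1 / T) * (LINT s:{0..T}|lborel. (L2norm (u s))\<^sup>2) / l ^ 3
    \<and> (1 / T) * (LINT s:{0..T}|lborel. (L2norm (u s))\<^sup>2) / l ^ 3 \<le> M\<^sup>2 / l ^ 3"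
proof -
  define E where "E = (LINT s:{0..T}|lborel. (L2norm (u s))\<^sup>2)"
  have "0 \<le> E / T" "E / T \<le> M\<^sup>2"
    using T set_integral_L2norm_square_le[OF _ u_meas bounded, of T]
    by (simp_all add: E_def set_lebesgue_integral_def pos_divide_le_eq)
  moreover have "(1 / T) * E / l ^ 3 = E / T / l ^ 3"
    by simp
  ultimately show ?thesis
    unfolding E_def[symmetric] using l
    by (intro conjI divide_right_mono divide_nonneg_pos) auto
qed

lemma scaled_average_le:
  fixes \<nu> T l H E C c :: real
  assumes T: "T > 0" and l: "l > 0"
    and H: "\<nu> * H \<le> C + c * sqrt T * sqrt E"
  shows "\<nu> * ((1 / T) * H / l ^ 3) \<le> C / l ^ 3 / T + c / l powr (3/2) * sqrt ((1 / T) * E / l ^ 3)"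
proof -
  define s where "s = l powr (3/2)"
  have "s * s = l powr 3"
    using l by (simp add: s_def flip: powr_add)
  then have s2: "s * s = l ^ 3"
    using l by (simp add: powr_realpow)
  have "s > 0" "sqrt T > 0" "T = sqrt T * sqrt T"
    using l T by (simp_all add: s_def)
  then have "C / l ^ 3 / T + c / s * sqrt ((1 / T) * E / l ^ 3) = (C + c * sqrt T * sqrt E) / (T * l ^ 3)"
    unfolding s2[symmetric] by (simp add: real_sqrt_divide real_sqrt_mult field_simps)
  moreover have "\<nu> * ((1 / T) * H / l ^ 3) \<le> (C + c * sqrt T * sqrt E) / (T * l ^ 3)"
    using H T l by (simp add: divide_right_mono)
  ultimately show ?thesis
    unfolding s_def by simp
qed

lemma time_average_dissipation_le:
  fixes u :: "real \<Rightarrow> real^3 \<Rightarrow> real^3"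
  assumes T: "T > 0" and l: "l > 0" and \<alpha>: "\<alpha> \<ge> 0" and f: "sqint f"
    and u_meas: "case_prod u \<in> borel_measurable borel"
    and u_L2: "\<forall>t\<ge>0. sqint (u t)"
    and bounded: "AE t in lborel. t > 0 \<longrightarrow> L2norm (u t) \<le> M"
    and energy: "(L2norm (u T))\<^sup>2 + 2 * \<nu> * (LINT s:{0..T}|lborel. (H1dot_norm (u s))\<^sup>2)
        \<le> (L2norm u0)\<^sup>2 + 2 * (LINT s:{0..T}|lborel. pairing f (u s))
           - 2 * \<alpha> * (LINT s:{0..T}|lborel. (L2norm (Pk \<kappa> (u s)))\<^sup>2)"
  shows "\<nu> * ((1 / T) * (LINT s:{0..T}|lborel. (H1dot_norm (u s))\<^sup>2) / l ^ 3)
    \<le> (L2norm u0)\<^sup>2 / 2 / l ^ 3 / T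
       + L2norm f / l powr (3/2) * sqrt ((1 / T) * (LINT s:{0..T}|lborel. (L2norm (u s))\<^sup>2) / l ^ 3)"
proof (rule scaled_average_le[OF T l])
  have "0 \<le> \<alpha> * (LINT s:{0..T}|lborel. (L2norm (Pk \<kappa> (u s)))\<^sup>2)"
    using \<alpha> by (simp add: set_lebesgue_integral_def)
  then have "\<nu> * (LINT s:{0..T}|lborel. (H1dot_norm (u s))\<^sup>2)
      \<le> (L2norm u0)\<^sup>2 / 2 + (LINT s:{0..T}|lborel. pairing f (u s))"
    using energy zero_le_power2[of "L2norm (u T)"] by linarith
  then show "\<nu> * (LINT s:{0..T}|lborel. (H1dot_norm (u s))\<^sup>2)
      \<le> (L2norm u0)\<^sup>2 / 2 + L2norm f * sqrt T * sqrt (LINT s:{0..T}|lborel. (L2norm (u s))\<^sup>2)"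
    using set_integral_pairing_le[OF _ f u_meas u_L2 bounded, of T] T by linarith
qed

lemma Limsup_le_sqrt_Limsup:
  fixes a b c :: "'a \<Rightarrow> real"
  assumes F: "F \<noteq> bot" and \<nu>: "\<nu> > 0" and K: "K \<ge> 0" and c: "(c \<longlongrightarrow> 0) F"
    and abc: "eventually (\<lambda>x. \<nu> * a x \<le> c x + K * sqrt (b x)) F"
    and b: "eventually (\<lambda>x. 0 \<le> b x \<and> b x \<le> B) F"
  shows "ereal \<nu> * Limsup F (\<lambda>x. ereal (a x))
    \<le> ereal (K * sqrt (real_of_ereal (Limsup F (\<lambda>x. ereal (b x)))))"
proof -
  have "Limsup F (\<lambda>x. ereal (b x)) \<le> ereal B"
    using b by (intro Limsup_bounded) (auto elim: eventually_mono)
  moreover have "0 \<le> Limsup F (\<lambda>x. ereal (b x))"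
    using b by (intro le_Limsup[OF F]) (auto elim: eventually_mono)
  ultimately obtain r where r: "Limsup F (\<lambda>x. ereal (b x)) = ereal r" "r \<ge> 0"
    by (cases "Limsup F (\<lambda>x. ereal (b x))") auto
  show ?thesis
  proof (rule ereal_le_epsilon2)
    fix e :: real assume e: "e > 0"
    define d where "d = e / (2 * (K + 1))"
    have d: "d > 0" "K * d \<le> e / 2"
      using e K by (auto simp: d_def field_simps)
    have "eventually (\<lambda>x. ereal (b x) < ereal (r + d\<^sup>2)) F"
      using d r by (intro Limsup_lessD) simp
    then have "eventually (\<lambda>x. b x < r + d\<^sup>2) F"
      by simp
    moreover have "eventually (\<lambda>x. dist (c x) 0 < e / 2) F"
      using c e by (intro tendstoD) auto
    ultimately have "eventually (\<lambda>x. ereal (a x) \<le> ereal ((K * sqrt r + e) / \<nu>)) F"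
      using abc b
    proof eventually_elim
      case (elim x)
      have "sqrt (b x) \<le> sqrt (r + d\<^sup>2)"
        using elim by simp
      also have "\<dots> \<le> sqrt r + d"
        using r d sqrt_add_le_add_sqrt[of r "d\<^sup>2"] by simp
      finally have "K * sqrt (b x) \<le> K * sqrt r + K * d"
        using K by (simp add: mult_left_mono flip: distrib_left)
      then have "\<nu> * a x \<le> K * sqrt r + e"
        using elim d by (simp add: dist_real_def)
      then show ?case
        using \<nu> by (simp add: pos_le_divide_eq mult.commute)
    qed
    then have "Limsup F (\<lambda>x. ereal (a x)) \<le> ereal ((K * sqrt r + e) / \<nu>)"
      by (rule Limsup_bounded)
    then have "ereal \<nu> * Limsup F (\<lambda>x. ereal (a x)) \<le> ereal \<nu> * ereal ((K * sqrt r + e) / \<nu>)"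
      using \<nu> by (intro ereal_mult_left_mono) auto
    also have "\<dots> = ereal (K * sqrt (real_of_ereal (Limsup F (\<lambda>x. ereal (b x))))) + ereal e"
      using \<nu> r by simp
    finally show "ereal \<nu> * Limsup F (\<lambda>x. ereal (a x))
        \<le> ereal (K * sqrt (real_of_ereal (Limsup F (\<lambda>x. ereal (b x))))) + ereal e" .
  qed
qed

theorem mainTheorem7:
  fixes \<nu> \<alpha> \<kappa> l\<^sub>0 :: real
    and u0 f :: "real^3 \<Rightarrow> real^3"
    and u :: "real \<Rightarrow> real^3 \<Rightarrow> real^3"
  assumes pos: "\<nu> > 0" "\<alpha> > 0" "\<kappa> > 0" "l\<^sub>0 > 0"
    and u0: "sqint u0" "div_free u0"
    and f: "sqint f" "in_Hdot_minus1 f" "div_free f"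
    and u_meas: "case_prod u \<in> borel_measurable borel"
    and u_L2: "\<forall>t\<ge>0. sqint (u t)"
    and u_Linf: "\<exists>M. AE t in lborel. t > 0 \<longrightarrow> L2norm (u t) \<le> M"
    and u_H1: "AE t in lborel. t \<ge> 0 \<longrightarrow> in_H1dot (u t)"
    and u_L2H1: "\<forall>T>0. set_integrable lborel {0..T} (\<lambda>t. (H1dot_norm (u t))\<^sup>2)"
    and sol: "weak_solution \<nu> \<alpha> \<kappa> f u0 u"
    and energy: "\<forall>t\<ge>0. (L2norm (u t))\<^sup>2 + 2 * \<nu> * (LINT s:{0..t}|lborel. (H1dot_norm (u s))\<^sup>2)
        \<le> (L2norm u0)\<^sup>2 + 2 * (LINT s:{0..t}|lborel. pairing f (u s))
           - 2 * \<alpha> * (LINT s:{0..t}|lborel. (L2norm (Pk \<kappa> (u s)))\<^sup>2)"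
  shows "ereal \<nu> * Limsup at_top (\<lambda>T. ereal ((1 / T) * (LINT s:{0..T}|lborel. (H1dot_norm (u s))\<^sup>2) / l\<^sub>0 ^ 3))
     \<le> ereal (L2norm f / l\<^sub>0 powr (3/2)
          * sqrt (real_of_ereal (Limsup at_top (\<lambda>T. ereal ((1 / T) * (LINT s:{0..T}|lborel. (L2norm (u s))\<^sup>2) / l\<^sub>0 ^ 3)))))"
proof -
  obtain M where bounded: "AE t in lborel. t > 0 \<longrightarrow> L2norm (u t) \<le> M"
    using u_Linf by blast
  show ?thesis
  proof (rule Limsup_le_sqrt_Limsup[where c = "\<lambda>T. (L2norm u0)\<^sup>2 / 2 / l\<^sub>0 ^ 3 / T" and B = "M\<^sup>2 / l\<^sub>0 ^ 3"])
    show "((\<lambda>T. (L2norm u0)\<^sup>2 / 2 / l\<^sub>0 ^ 3 / T) \<longlongrightarrow> 0) at_top"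
      by (intro tendsto_divide_0[OF tendsto_const] filterlim_at_top_imp_at_infinity filterlim_ident)
    show "\<forall>\<^sub>F T in at_top. \<nu> * ((1 / T) * (LINT s:{0..T}|lborel. (H1dot_norm (u s))\<^sup>2) / l\<^sub>0 ^ 3)
        \<le> (L2norm u0)\<^sup>2 / 2 / l\<^sub>0 ^ 3 / T
           + L2norm f / l\<^sub>0 powr (3/2) * sqrt ((1 / T) * (LINT s:{0..T}|lborel. (L2norm (u s))\<^sup>2) / l\<^sub>0 ^ 3)"
      using eventually_gt_at_top[of 0]
    proof eventually_elim
      case (elim T)
      then show ?case
        using energy less_imp_le[OF pos(2)]
        by (intro time_average_dissipation_le[where \<kappa> = \<kappa>, OF elim pos(4) _ f(1) u_meas u_L2 bounded]) auto
    qed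
    show "\<forall>\<^sub>F T in at_top. 0 \<le> (1 / T) * (LINT s:{0..T}|lborel. (L2norm (u s))\<^sup>2) / l\<^sub>0 ^ 3
        \<and> (1 / T) * (LINT s:{0..T}|lborel. (L2norm (u s))\<^sup>2) / l\<^sub>0 ^ 3 \<le> M\<^sup>2 / l\<^sub>0 ^ 3"
      using eventually_gt_at_top[of 0]
      by eventually_elim (rule time_average_L2norm_square_bounds[OF _ pos(4) u_meas bounded])
  qed (use pos(1,4) L2norm_nonneg[of f] in simp_all)
qed

end
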